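(* Let $\mathcal{H}\subseteq\{0,1\}^{\mathcal{X}}$ be a class, $m\in\mathbb{N}$, and let $\omega^\star_m$ be the fractional clique number of $G_m(\mathcal{H})$. Then there is a regular Borel probability measure $\mu^\star$ on $\{0,1\}^{\mathcal{X}}$ (product topology) such that for every $\mathcal{H}$-realizable dataset $S$ of size $m$, $\Pr_{h\sim\mu^\star}[h\text{ is consistent with }S]\ge 1/\omega^\star_m$.
   Context: A dataset of size $m$ is $S=((x_1,y_1),\dots,(x_m,y_m))\in(\mathcal{X}\times\{0,1\})^m$; $h$ is consistent with $S$ if $h(x_i)=y_i$ for all $i$; $S$ is $\mathcal{H}$-realizable if some $h\in\mathcal{H}$ is consistent with it. $G_m(\mathcal{H})$ is the graph on the realizable datasets of size $m$ with $S,S'$ adjacent iff there is $x$ with $(x,0)$ appearing in $S$ and $(x,1)$ appearing in $S'$. A fractional clique of a graph $G=(V,E)$ is $\delta:V\to[0,\infty)$ with $\sum_{v\in I}\delta(v)\le1$ for every independent set $I$; $\omega^\star_m$ is the supremum of $\sum_v\delta(v)$ over fractional cliques of $G_m(\mathcal{H})$. *)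

theory Defs
  imports "HOL-Analysis.Analysis" "HOL-Probability.Probability"
begin

text \<open>Datasets of size m are lists of labelled points; labels 0/1 are False/True.
  Hypotheses are functions 'x \<Rightarrow> bool; the type 'x \<Rightarrow> bool carries the
  product topology (Function_Topology) of the discrete topology on bool.\<close>

type_synonym 'x dataset = "('x \<times> bool) list"

definition consistent :: "('x \<Rightarrow> bool) \<Rightarrow> 'x dataset \<Rightarrow> bool" where
  "consistent h S \<longleftrightarrow> (\<forall>i<length S. h (fst (S ! i)) = snd (S ! i))"

definition realizable :: "('x \<Rightarrow> bool) set \<Rightarrow> 'x dataset \<Rightarrow> bool" where
  "realizable H S \<longleftrightarrow> (\<exists>h\<in>H. consistent h S)"

definition Gm_vertices :: "('x \<Rightarrow> bool) set \<Rightarrow> nat \<Rightarrow> 'x dataset set" where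
  "Gm_vertices H m = {S. length S = m \<and> realizable H S}"

text \<open>Adjacency in G_m(H) (undirected: symmetric closure of the defining relation).\<close>
definition Gm_adj :: "'x dataset \<Rightarrow> 'x dataset \<Rightarrow> bool" where
  "Gm_adj S S' \<longleftrightarrow>
     (\<exists>x. ((x, False) \<in> set S \<and> (x, True) \<in> set S') \<or> ((x, False) \<in> set S' \<and> (x, True) \<in> set S))"

definition Gm_independent :: "('x \<Rightarrow> bool) set \<Rightarrow> nat \<Rightarrow> 'x dataset set \<Rightarrow> bool" where
  "Gm_independent H m I \<longleftrightarrow> I \<subseteq> Gm_vertices H m \<and> (\<forall>S\<in>I. \<forall>S'\<in>I. \<not> Gm_adj S S')"

definition nnsum :: "('a \<Rightarrow> real) \<Rightarrow> 'a set \<Rightarrow> ennreal" where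
  "nnsum f A = (SUP F\<in>{F. finite F \<and> F \<subseteq> A}. ennreal (sum f F))"

definition fractional_clique :: "('x \<Rightarrow> bool) set \<Rightarrow> nat \<Rightarrow> ('x dataset \<Rightarrow> real) \<Rightarrow> bool" where
  "fractional_clique H m \<delta> \<longleftrightarrow>
     (\<forall>S\<in>Gm_vertices H m. \<delta> S \<ge> 0) \<and>
     (\<forall>I. Gm_independent H m I \<longrightarrow> nnsum \<delta> I \<le> 1)"

definition frac_clique_number :: "('x \<Rightarrow> bool) set \<Rightarrow> nat \<Rightarrow> ennreal" where
  "frac_clique_number H m =
     (SUP \<delta>\<in>{\<delta>. fractional_clique H m \<delta>}. nnsum \<delta> (Gm_vertices H m))"

definition regular_borel_measure :: "'a::topological_space measure \<Rightarrow> bool" where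
  "regular_borel_measure M \<longleftrightarrow>
     sets M = sets borel \<and>
     (\<forall>A\<in>sets borel.
        emeasure M A = (INF U\<in>{U. open U \<and> A \<subseteq> U}. emeasure M U) \<and>
        emeasure M A = (SUP K\<in>{K. compact K \<and> K \<subseteq> A}. emeasure M K))"

end

theory Submission
  imports Defs
begin

text \<open>For finitely many realizable datasets only the finitely many hypotheses supported on
  their points matter, and the resulting finite covering problem is a linear programme:
  its dual weightings are fractional cliques, since datasets that are simultaneously
  consistent with one hypothesis form an independent set. LP duality therefore yields a
  finitely supported distribution giving every one of these datasets probability at least
  \<open>1 / \<omega>\<^sup>\<star>\<^sub>m\<close>. Tychonoff's theorem in \<open>[0,1]^(sets)\<close> glues these distributions into one finitely
  additive probability on all sets of hypotheses, and since the consistency events are clopen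
  in the compact, zero-dimensional space \<open>{0,1}^\<X>\<close>, approximating by clopen sets from inside
  and by open sets from outside turns it into a regular Borel probability measure that is
  at least as large on every clopen set.\<close>

section \<open>Clopen sets of the Cantor space\<close>

definition clopen :: "'a::topological_space set \<Rightarrow> bool" where
  "clopen C \<longleftrightarrow> open C \<and> closed C"

lemma clopen_empty: "clopen {}"
  unfolding clopen_def by auto

lemma clopen_UNIV: "clopen UNIV"
  unfolding clopen_def by auto

lemma clopen_Un: "clopen A \<Longrightarrow> clopen B \<Longrightarrow> clopen (A \<union> B)"
  unfolding clopen_def by auto

lemma clopen_UN: "finite I \<Longrightarrow> (\<And>i. i \<in> I \<Longrightarrow> clopen (A i)) \<Longrightarrow> clopen (\<Union>i\<in>I. A i)"
  unfolding clopen_def by (auto intro: open_UN closed_UN)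

lemma compact_PiE_UNIV:
  fixes A :: "'i \<Rightarrow> 'a::topological_space set"
  assumes "\<And>i. compact (A i)"
  shows "compact (PiE UNIV A)"
proof -
  have "compactin (product_topology (\<lambda>_. euclidean) UNIV) (PiE UNIV A)"
    by (subst compactin_PiE) (simp add: compactin_euclidean_iff assms)
  then show ?thesis
    by (simp add: euclidean_product_topology compactin_euclidean_iff)
qed

lemma compact_UNIV_fun_bool: "compact (UNIV :: ('x \<Rightarrow> bool) set)"
  using compact_PiE_UNIV[of "\<lambda>_::'x. UNIV :: bool set"] by (simp add: finite_imp_compact)

lemma compact_imp_closed_fun_bool:
  assumes "compact (K :: ('x \<Rightarrow> bool) set)"
  shows "closed K"
proof -
  have "Hausdorff_space (euclidean :: bool topology)"
    unfolding Hausdorff_space_def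
  proof (intro allI impI)
    fix x y :: bool assume "x \<in> topspace euclidean \<and> y \<in> topspace euclidean \<and> x \<noteq> y"
    then show "\<exists>U V. openin euclidean U \<and> openin euclidean V \<and> x \<in> U \<and> y \<in> V \<and> disjnt U V"
      by (intro exI[of _ "{x}"] exI[of _ "{y}"])
         (auto simp: disjnt_def intro: discrete_topology_class.open_discrete)
  qed
  then have "Hausdorff_space (euclidean :: ('x \<Rightarrow> bool) topology)"
    by (simp add: Hausdorff_space_product_topology flip: euclidean_product_topology)
  then have "closedin euclidean K"
    by (rule compactin_imp_closedin) (simp add: assms compactin_euclidean_iff)
  then show ?thesis by simp
qed

lemma clopen_cylinder:
  assumes "finite J"
  shows "clopen {g :: 'x \<Rightarrow> bool. \<forall>j\<in>J. g (x j) = b j}"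
proof -
  have "open {g :: 'x \<Rightarrow> bool. \<forall>j\<in>J. g (x j) \<in> {b j}}"
    by (rule product_topology_basis')
       (use assms in \<open>auto intro: discrete_topology_class.open_discrete\<close>)
  moreover have "closed {g :: 'x \<Rightarrow> bool. g (x j) = b j}" for j
    by (rule closed_Collect_eq) (auto intro: continuous_on_product_coordinates)
  then have "closed (\<Inter>j\<in>J. {g :: 'x \<Rightarrow> bool. g (x j) = b j})"
    by (simp add: closed_INT)
  moreover have "{g. \<forall>j\<in>J. g (x j) = b j} = (\<Inter>j\<in>J. {g. g (x j) = b j})"
    by auto
  ultimately show ?thesis
    unfolding clopen_def by auto
qed

lemma clopen_consistent: "clopen {h. consistent h S}"
proof -
  have "{h. consistent h S} = {g. \<forall>i\<in>{..<length S}. g (fst (S ! i)) = snd (S ! i)}"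
    by (auto simp: consistent_def)
  then show ?thesis
    using clopen_cylinder[of "{..<length S}" "\<lambda>i. fst (S ! i)" "\<lambda>i. snd (S ! i)"] by simp
qed

lemma clopen_basis_fun_bool:
  assumes "open (U :: ('x \<Rightarrow> bool) set)" "h \<in> U"
  shows "\<exists>C. clopen C \<and> h \<in> C \<and> C \<subseteq> U"
proof -
  obtain V where V: "finite {i. V i \<noteq> UNIV}" "h \<in> PiE UNIV V" "PiE UNIV V \<subseteq> U"
    using assms unfolding open_fun_def openin_product_topology_alt by auto
  define C where "C = {g :: 'x \<Rightarrow> bool. \<forall>i\<in>{i. V i \<noteq> UNIV}. g i = h i}"
  have "clopen C"
    unfolding C_def using clopen_cylinder[OF V(1), of id h] by simp
  moreover have "C \<subseteq> PiE UNIV V"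
  proof
    fix g assume "g \<in> C"
    then have "g i \<in> V i" for i
      using V(2) by (cases "V i = UNIV") (auto simp: C_def PiE_iff)
    then show "g \<in> PiE UNIV V" by (simp add: PiE_iff)
  qed
  moreover have "h \<in> C"
    by (simp add: C_def)
  ultimately show ?thesis
    using V(3) by blast
qed

section \<open>Finitely additive probabilities\<close>

locale prob_charge =
  fixes lam :: "'a set \<Rightarrow> real"
  assumes nonneg: "0 \<le> lam A"
    and total: "lam UNIV = 1"
    and additive: "A \<inter> B = {} \<Longrightarrow> lam (A \<union> B) = lam A + lam B"
begin

lemma lam_empty: "lam {} = 0"
  using additive[of "{}" "{}"] by simp

lemma lam_mono: "A \<subseteq> B \<Longrightarrow> lam A \<le> lam B"
  using additive[of A "B - A"] nonneg[of "B - A"] by (simp add: Un_absorb1)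

lemma lam_le_1: "lam A \<le> 1"
  using lam_mono[of A UNIV] total by simp

lemma lam_Un_le: "lam (A \<union> B) \<le> lam A + lam B"
  using additive[of A "B - A"] lam_mono[of "B - A" B] by simp

lemma lam_UN_le: "finite I \<Longrightarrow> lam (\<Union>i\<in>I. A i) \<le> (\<Sum>i\<in>I. lam (A i))"
proof (induction I rule: finite_induct)
  case empty
  then show ?case by (simp add: lam_empty)
next
  case (insert i I)
  then show ?case
    using lam_Un_le[of "A i" "\<Union>i\<in>I. A i"] by simp
qed

end

lemma prob_charge_finite_distribution:
  assumes "finite T" "\<forall>t\<in>T. 0 \<le> p t" "(\<Sum>t\<in>T. p t) = 1"
  shows "prob_charge (\<lambda>B. \<Sum>t\<in>T. p t * indicator B t)"
proof
  show "0 \<le> (\<Sum>t\<in>T. p t * indicator B t)" for B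
    using assms by (auto intro: sum_nonneg)
  show "(\<Sum>t\<in>T. p t * indicator UNIV t) = 1"
    using assms by simp
  show "(\<Sum>t\<in>T. p t * indicator (B \<union> B') t) = (\<Sum>t\<in>T. p t * indicator B t) + (\<Sum>t\<in>T. p t * indicator B' t)"
    if "B \<inter> B' = {}" for B B'
    by (simp add: indicator_disj_union[OF that] distrib_left sum.distrib)
qed

lemma compact_prob_charges: "compact {lam :: 'a set \<Rightarrow> real. prob_charge lam}"
proof -
  have "{lam :: 'a set \<Rightarrow> real. prob_charge lam} = PiE UNIV (\<lambda>_. {0..1}) \<inter> ((\<Inter>A. {l. 0 \<le> l A}) \<inter> {l. l UNIV = 1} \<inter>
      (\<Inter>(A, B)\<in>{(A, B). A \<inter> B = {}}. {l. l (A \<union> B) = l A + l B}))" (is "_ = ?box \<inter> ?C")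
  proof (intro set_eqI iffI)
    fix l :: "'a set \<Rightarrow> real" assume "l \<in> {lam. prob_charge lam}"
    then interpret prob_charge l by simp
    show "l \<in> ?box \<inter> ?C"
      using nonneg lam_le_1 total additive by (auto simp: PiE_UNIV_domain)
  qed (auto simp: prob_charge_def)
  moreover have "closed ?C"
  proof -
    have "closed {l :: 'a set \<Rightarrow> real. 0 \<le> l A}" "closed {l :: 'a set \<Rightarrow> real. l UNIV = 1}"
      "closed {l :: 'a set \<Rightarrow> real. l (A \<union> B) = l A + l B}" for A B
      by (auto intro!: closed_Collect_le closed_Collect_eq continuous_intros)
    then show ?thesis
      by (auto intro!: closed_Int closed_INT)
  qed
  ultimately show ?thesis
    by (simp add: compact_Int_closed compact_PiE_UNIV)
qed

lemma prob_charge_from_finite_distributions: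
  fixes A :: "'i \<Rightarrow> 'a set"
  assumes "\<And>J. finite J \<Longrightarrow> J \<subseteq> I \<Longrightarrow> \<exists>p T. finite T \<and> (\<forall>t\<in>T. 0 \<le> p t) \<and>
      (\<Sum>t\<in>T. p t) = 1 \<and> (\<forall>i\<in>J. c \<le> (\<Sum>t\<in>T. p t * indicator (A i) t))"
  shows "\<exists>lam. prob_charge lam \<and> (\<forall>i\<in>I. c \<le> lam (A i))"
proof -
  define Above where "Above i = {l :: 'a set \<Rightarrow> real. c \<le> l (A i)}" for i
  have "{lam. prob_charge lam} \<inter> \<Inter>(Above ` I) \<noteq> {}"
  proof (rule compact_imp_fip[OF compact_prob_charges])
    show "closed X" if "X \<in> Above ` I" for X
      using that unfolding Above_def by (auto intro!: closed_Collect_le continuous_intros)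
    fix Fam assume "finite Fam" "Fam \<subseteq> Above ` I"
    then obtain J where J: "J \<subseteq> I" "finite J" "Fam = Above ` J"
      by (meson finite_subset_image)
    obtain p T where pT: "finite T" "\<forall>t\<in>T. 0 \<le> p t" "(\<Sum>t\<in>T. p t) = 1"
      and bounds: "\<forall>i\<in>J. c \<le> (\<Sum>t\<in>T. p t * indicator (A i) t)"
      using assms[OF J(2,1)] by blast
    have "prob_charge (\<lambda>B. \<Sum>t\<in>T. p t * indicator B t)"
      using pT by (rule prob_charge_finite_distribution)
    moreover have "(\<lambda>B. \<Sum>t\<in>T. p t * indicator B t) \<in> \<Inter>Fam"
      using bounds by (auto simp: J(3) Above_def)
    ultimately show "{lam. prob_charge lam} \<inter> \<Inter>Fam \<noteq> {}"
      by blast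
  qed
  then show ?thesis
    by (auto simp: Above_def)
qed

section \<open>From a finitely additive probability to a regular Borel measure\<close>

lemma suminf_ennreal_halves: "0 \<le> e \<Longrightarrow> (\<Sum>i. ennreal (e / 2 ^ Suc i)) = ennreal e"
proof -
  assume "0 \<le> e"
  have "(\<lambda>i. e / 2 ^ Suc i) sums e"
    using sums_mult[OF power_half_series, of e] by (simp add: power_divide)
  then show ?thesis
    using \<open>0 \<le> e\<close> by (simp add: suminf_ennreal2 sums_iff)
qed

locale stone_charge = prob_charge lam for lam :: "'a::topological_space set \<Rightarrow> real" +
  assumes compact_carrier: "compact (UNIV :: 'a set)"
    and clopen_basis: "open (U :: 'a set) \<Longrightarrow> x \<in> U \<Longrightarrow> \<exists>C. clopen C \<and> x \<in> C \<and> C \<subseteq> U"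
    and compact_sets_closed: "compact (K :: 'a set) \<Longrightarrow> closed K"
begin

definition inner_content :: "'a set \<Rightarrow> ennreal" where
  "inner_content U = (SUP C\<in>{C. clopen C \<and> C \<subseteq> U}. ennreal (lam C))"

definition outer_measure :: "'a set \<Rightarrow> ennreal" where
  "outer_measure A = (INF U\<in>{U. open U \<and> A \<subseteq> U}. inner_content U)"

lemma closed_imp_compact:
  assumes "closed (C :: 'a set)"
  shows "compact C"
  using closed_Int_compact[OF assms compact_carrier] by simp

lemma inner_content_ge: "clopen C \<Longrightarrow> C \<subseteq> U \<Longrightarrow> ennreal (lam C) \<le> inner_content U"
  unfolding inner_content_def by (rule SUP_upper) auto

lemma inner_content_le_1: "inner_content U \<le> 1"
  unfolding inner_content_def by (rule SUP_least) (use lam_le_1 in auto)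

lemma outer_measure_le_inner: "open U \<Longrightarrow> A \<subseteq> U \<Longrightarrow> outer_measure A \<le> inner_content U"
  unfolding outer_measure_def by (rule INF_lower) auto

lemma outer_measure_mono: "A \<subseteq> B \<Longrightarrow> outer_measure A \<le> outer_measure B"
  unfolding outer_measure_def by (rule INF_superset_mono) auto

lemma outer_measure_finite: "outer_measure A < \<top>"
  using outer_measure_le_inner[of UNIV A] inner_content_le_1[of UNIV]
  by (simp add: order_le_less_trans)

lemma outer_measure_ge_clopen: "clopen C \<Longrightarrow> ennreal (lam C) \<le> outer_measure C"
  unfolding outer_measure_def by (rule INF_greatest) (auto intro: inner_content_ge)

lemma outer_measure_empty: "outer_measure {} = 0"
proof -
  have "inner_content {} = 0"
    unfolding inner_content_def by (auto intro!: antisym SUP_least simp: lam_empty)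
  then show ?thesis
    using outer_measure_le_inner[of "{}" "{}"] by simp
qed

lemma outer_measure_UNIV: "outer_measure UNIV = 1"
  using outer_measure_le_inner[of UNIV UNIV] inner_content_le_1[of UNIV]
    outer_measure_ge_clopen[OF clopen_UNIV] total by simp

lemma clopen_finite_refinement:
  fixes C :: "'a set" and U :: "'i \<Rightarrow> 'a set"
  assumes "clopen C" "C \<subseteq> (\<Union>i. U i)" "\<And>i. open (U i)"
  obtains N E where "finite N" "\<And>i. clopen (E i)" "\<And>i. E i \<subseteq> U i" "C \<subseteq> (\<Union>i\<in>N. E i)"
proof -
  define \<D> where "\<D> = {D. clopen D \<and> (\<exists>i. D \<subseteq> U i)}"
  have "C \<subseteq> \<Union>\<D>"
  proof
    fix h assume "h \<in> C"
    then obtain i where "h \<in> U i" using assms(2) by auto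
    then obtain D where "clopen D" "h \<in> D" "D \<subseteq> U i"
      using clopen_basis[of "U i" h] assms(3) by blast
    then show "h \<in> \<Union>\<D>"
      unfolding \<D>_def by blast
  qed
  moreover have "\<forall>D\<in>\<D>. open D"
    unfolding \<D>_def clopen_def by auto
  moreover have "compact C"
    using assms(1) closed_imp_compact by (simp add: clopen_def)
  ultimately obtain \<D>' where \<D>': "\<D>' \<subseteq> \<D>" "finite \<D>'" "C \<subseteq> \<Union>\<D>'"
    using compactE by metis
  then have "\<forall>D\<in>\<D>'. \<exists>i. D \<subseteq> U i"
    unfolding \<D>_def by blast
  then obtain ix where ix: "\<And>D. D \<in> \<D>' \<Longrightarrow> D \<subseteq> U (ix D)"
    by metis
  define E where "E i = (\<Union>D\<in>{D\<in>\<D>'. ix D = i}. D)" for i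
  show thesis
  proof
    show "finite (ix ` \<D>')"
      using \<D>'(2) by simp
    show "clopen (E i)" for i
      unfolding E_def by (rule clopen_UN) (use \<D>' in \<open>auto simp: \<D>_def\<close>)
    show "E i \<subseteq> U i" for i
      using ix by (auto simp: E_def)
    show "C \<subseteq> (\<Union>i\<in>ix ` \<D>'. E i)"
      using \<D>'(3) unfolding E_def by blast
  qed
qed

lemma inner_content_countably_subadditive:
  assumes "\<And>i. open (U i)"
  shows "inner_content (\<Union>i. U i) \<le> (\<Sum>i. inner_content (U i))"
  unfolding inner_content_def[of "\<Union>i. U i"]
proof (rule SUP_least)
  fix C assume "C \<in> {C. clopen C \<and> C \<subseteq> (\<Union>i. U i)}"
  then obtain N E where N: "finite N" and E: "\<And>i. clopen (E i)" "\<And>i. E i \<subseteq> U i"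
    and cover: "C \<subseteq> (\<Union>i\<in>N. E i)"
    using clopen_finite_refinement[of C U] assms by blast
  have "lam C \<le> (\<Sum>i\<in>N. lam (E i))"
    using lam_mono[OF cover] lam_UN_le[OF N, of E] by linarith
  then have "ennreal (lam C) \<le> ennreal (\<Sum>i\<in>N. lam (E i))"
    by (rule ennreal_leI)
  also have "\<dots> = (\<Sum>i\<in>N. ennreal (lam (E i)))"
    by (rule sum_ennreal[symmetric]) (rule nonneg)
  also have "\<dots> \<le> (\<Sum>i\<in>N. inner_content (U i))"
    by (rule sum_mono) (rule inner_content_ge[OF E])
  also have "\<dots> \<le> (\<Sum>i. inner_content (U i))"
    by (rule sum_le_suminf) (use N in auto)
  finally show "ennreal (lam C) \<le> (\<Sum>i. inner_content (U i))" .
qed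

lemma outer_measure_countably_subadditive:
  "outer_measure (\<Union>i. A i) \<le> (\<Sum>i. outer_measure (A i))"
proof (rule ennreal_le_epsilon)
  fix e :: real assume "0 < e"
  have "\<exists>U. open U \<and> A i \<subseteq> U \<and> inner_content U < outer_measure (A i) + ennreal (e / 2 ^ Suc i)"
    for i
  proof -
    have "outer_measure (A i) < outer_measure (A i) + ennreal (e / 2 ^ Suc i)"
      using outer_measure_finite[of "A i"] \<open>0 < e\<close> by simp
    then show ?thesis
      unfolding outer_measure_def[of "A i"] by (subst (asm) INF_less_iff) auto
  qed
  then obtain U where U: "\<And>i. open (U i)" "\<And>i. A i \<subseteq> U i"
    "\<And>i. inner_content (U i) < outer_measure (A i) + ennreal (e / 2 ^ Suc i)"
    by metis
  have "outer_measure (\<Union>i. A i) \<le> inner_content (\<Union>i. U i)"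
    by (rule outer_measure_le_inner) (use U in auto)
  also have "\<dots> \<le> (\<Sum>i. inner_content (U i))"
    by (rule inner_content_countably_subadditive) (rule U)
  also have "\<dots> \<le> (\<Sum>i. outer_measure (A i) + ennreal (e / 2 ^ Suc i))"
    by (rule suminf_le, rule less_imp_le[OF U(3)], auto)
  also have "\<dots> = (\<Sum>i. outer_measure (A i)) + (\<Sum>i. ennreal (e / 2 ^ Suc i))"
    by (rule suminf_add[symmetric]) auto
  also have "(\<Sum>i. ennreal (e / 2 ^ Suc i)) = ennreal e"
    by (rule suminf_ennreal_halves) (use \<open>0 < e\<close> in simp)
  finally show "outer_measure (\<Union>i. A i) \<le> (\<Sum>i. outer_measure (A i)) + ennreal e" .
qed

lemma outer_measure_subadditive: "outer_measure (A \<union> B) \<le> outer_measure A + outer_measure B"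
  using outer_measure_countably_subadditive[of "binaryset A B"]
  by (simp add: range_binaryset_eq suminf_binaryset_eq outer_measure_empty)

lemma inner_content_split:
  assumes "clopen C" "C \<subseteq> V" "open V"
  shows "ennreal (lam C) + inner_content (V - C) \<le> inner_content V"
proof -
  have "ennreal (lam C) + inner_content (V - C)
      = (SUP D\<in>{D. clopen D \<and> D \<subseteq> V - C}. ennreal (lam C) + ennreal (lam D))"
    unfolding inner_content_def[of "V - C"]
    by (rule ennreal_SUP_add_right) (use clopen_empty in auto)
  also have "\<dots> \<le> inner_content V"
  proof (rule SUP_least)
    fix D assume "D \<in> {D. clopen D \<and> D \<subseteq> V - C}"
    then have D: "clopen D" "D \<subseteq> V - C" by auto
    then have "C \<inter> D = {}" by auto
    then have "ennreal (lam C) + ennreal (lam D) = ennreal (lam (C \<union> D))"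
      using additive[of C D] nonneg[of C] nonneg[of D]
      by (simp add: ennreal_plus[symmetric] del: ennreal_plus)
    also have "\<dots> \<le> inner_content V"
      by (rule inner_content_ge) (use assms D clopen_Un in auto)
    finally show "ennreal (lam C) + ennreal (lam D) \<le> inner_content V" .
  qed
  finally show ?thesis .
qed

lemma outer_measure_split_open:
  assumes "open U"
  shows "outer_measure (B \<inter> U) + outer_measure (B - U) \<le> outer_measure B"
  unfolding outer_measure_def[of B]
proof (rule INF_greatest)
  fix V assume "V \<in> {V. open V \<and> B \<subseteq> V}"
  then have V: "open V" "B \<subseteq> V" by auto
  have "inner_content (V \<inter> U) + outer_measure (B - U)
      = (SUP C\<in>{C. clopen C \<and> C \<subseteq> V \<inter> U}. ennreal (lam C) + outer_measure (B - U))"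
    unfolding inner_content_def[of "V \<inter> U"]
    by (rule ennreal_SUP_add_left[symmetric]) (use clopen_empty in auto)
  also have "\<dots> \<le> inner_content V"
  proof (rule SUP_least)
    fix C assume "C \<in> {C. clopen C \<and> C \<subseteq> V \<inter> U}"
    then have C: "clopen C" "C \<subseteq> V \<inter> U" by auto
    have "outer_measure (B - U) \<le> inner_content (V - C)"
      by (rule outer_measure_le_inner) (use V C in \<open>auto simp: clopen_def\<close>)
    then show "ennreal (lam C) + outer_measure (B - U) \<le> inner_content V"
      using inner_content_split[of C V] C V by (meson add_left_mono le_infE order_trans)
  qed
  finally have "inner_content (V \<inter> U) + outer_measure (B - U) \<le> inner_content V" .
  moreover have "outer_measure (B \<inter> U) \<le> inner_content (V \<inter> U)"
    by (rule outer_measure_le_inner) (use V assms in auto)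
  ultimately show "outer_measure (B \<inter> U) + outer_measure (B - U) \<le> inner_content V"
    by (meson add_right_mono order_trans)
qed

lemma open_in_lambda_system: "open U \<Longrightarrow> U \<in> lambda_system UNIV (Pow UNIV) outer_measure"
  using outer_measure_split_open[of U] outer_measure_subadditive
  by (auto simp: lambda_system_def Int_commute Diff_eq intro!: antisym)
     (metis Diff_eq Int_Diff_Un Int_commute)

lemma measure_space_outer_measure: "measure_space UNIV (sets borel) outer_measure"
proof -
  have "outer_measure_space (Pow UNIV) outer_measure"
    unfolding outer_measure_space_def positive_def increasing_def countably_subadditive_def
    using outer_measure_empty outer_measure_mono outer_measure_countably_subadditive by auto
  then have ms: "measure_space UNIV (lambda_system UNIV (Pow UNIV) outer_measure) outer_measure"
    by (rule sigma_algebra.caratheodory_lemma[OF sigma_algebra_Pow])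
  then have "sigma_algebra UNIV (lambda_system UNIV (Pow UNIV) outer_measure)"
    by (simp add: measure_space_def)
  then have "sets borel \<subseteq> lambda_system UNIV (Pow UNIV) outer_measure"
    unfolding sets_borel by (rule sigma_algebra.sigma_sets_subset) (use open_in_lambda_system in auto)
  then show ?thesis
    using measure_down[OF ms sets.sigma_algebra_axioms[of borel, unfolded space_borel]] by simp
qed

definition charge_measure :: "'a measure" where
  "charge_measure = measure_of UNIV (sets borel) outer_measure"

lemma sets_charge_measure: "sets charge_measure = sets borel"
proof -
  have "sigma_algebra (UNIV :: 'a set) (sets borel)"
    using measure_space_outer_measure by (simp add: measure_space_def)
  then show ?thesis
    unfolding charge_measure_def by (simp add: sigma_algebra.sigma_sets_eq)
qed

lemma emeasure_charge_measure:
  assumes "A \<in> sets borel"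
  shows "emeasure charge_measure A = outer_measure A"
proof -
  have "sigma_algebra (UNIV :: 'a set) (sets borel)" "positive (sets borel) outer_measure"
    "countably_additive (sets borel) outer_measure"
    using measure_space_outer_measure by (simp_all add: measure_space_def)
  then show ?thesis
    unfolding charge_measure_def using emeasure_measure_of_sigma assms by blast
qed

lemma prob_space_charge_measure: "prob_space charge_measure"
proof
  have "space charge_measure = UNIV"
    by (simp add: charge_measure_def space_measure_of_conv)
  then show "emeasure charge_measure (space charge_measure) = 1"
    by (simp add: emeasure_charge_measure outer_measure_UNIV)
qed

lemma charge_le_charge_measure: "clopen C \<Longrightarrow> ennreal (lam C) \<le> emeasure charge_measure C"
  using outer_measure_ge_clopen[of C] emeasure_charge_measure[of C] by (auto simp: clopen_def)

lemma outer_measure_compl: "A \<in> sets borel \<Longrightarrow> outer_measure A + outer_measure (- A) = 1"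
  using plus_emeasure[of A charge_measure "- A"]
  by (simp add: sets_charge_measure emeasure_charge_measure outer_measure_UNIV)

lemma outer_measure_outer_regular:
  "outer_measure A = (INF U\<in>{U. open U \<and> A \<subseteq> U}. outer_measure U)"
proof (rule antisym)
  have "(INF U\<in>{U. open U \<and> A \<subseteq> U}. outer_measure U) \<le> (INF U\<in>{U. open U \<and> A \<subseteq> U}. inner_content U)"
    by (rule INF_mono) (auto intro: outer_measure_le_inner)
  then show "(INF U\<in>{U. open U \<and> A \<subseteq> U}. outer_measure U) \<le> outer_measure A"
    by (simp add: outer_measure_def)
  show "outer_measure A \<le> (INF U\<in>{U. open U \<and> A \<subseteq> U}. outer_measure U)"
    by (rule INF_greatest) (simp add: outer_measure_mono)
qed

text \<open>Inner regularity comes from outer regularity of the complement, whose open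
  neighbourhoods have compact complements.\<close>
lemma outer_measure_inner_regular:
  assumes "A \<in> sets borel"
  shows "outer_measure A = (SUP K\<in>{K. compact K \<and> K \<subseteq> A}. outer_measure K)"
proof (rule antisym)
  show "outer_measure A \<le> (SUP K\<in>{K. compact K \<and> K \<subseteq> A}. outer_measure K)"
  proof (rule ennreal_le_epsilon)
    fix e :: real assume "0 < e"
    have "outer_measure (- A) < outer_measure (- A) + ennreal e"
      using outer_measure_finite[of "- A"] \<open>0 < e\<close> by simp
    then obtain U where U: "open U" "- A \<subseteq> U" "inner_content U < outer_measure (- A) + ennreal e"
      unfolding outer_measure_def[of "- A"] by (subst (asm) INF_less_iff) auto
    have K: "compact (- U)" "- U \<subseteq> A" "- U \<in> sets borel"
      using U closed_imp_compact[of "- U"] by auto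
    have "outer_measure A + outer_measure (- A) = outer_measure (- U) + outer_measure U"
      using outer_measure_compl[OF assms] outer_measure_compl[OF K(3)] by simp
    also have "\<dots> \<le> outer_measure (- U) + (outer_measure (- A) + ennreal e)"
      using outer_measure_le_inner[of U U] U by (meson add_left_mono less_imp_le order_trans order_refl)
    finally have "outer_measure A \<le> outer_measure (- U) + ennreal e"
      using outer_measure_finite[of "- A"] by (auto simp: ac_simps ennreal_add_left_cancel_le)
    also have "outer_measure (- U) \<le> (SUP K\<in>{K. compact K \<and> K \<subseteq> A}. outer_measure K)"
      by (rule SUP_upper) (use K in auto)
    finally show "outer_measure A \<le> (SUP K\<in>{K. compact K \<and> K \<subseteq> A}. outer_measure K) + ennreal e"
      by simp
  qed
  show "(SUP K\<in>{K. compact K \<and> K \<subseteq> A}. outer_measure K) \<le> outer_measure A"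
    by (rule SUP_least) (simp add: outer_measure_mono)
qed

lemma regular_charge_measure: "regular_borel_measure charge_measure"
  unfolding regular_borel_measure_def
proof (intro conjI ballI)
  fix A :: "'a set" assume A: "A \<in> sets borel"
  have "(INF U\<in>{U. open U \<and> A \<subseteq> U}. emeasure charge_measure U)
      = (INF U\<in>{U. open U \<and> A \<subseteq> U}. outer_measure U)"
    by (rule INF_cong) (auto simp: emeasure_charge_measure)
  then show "emeasure charge_measure A = (INF U\<in>{U. open U \<and> A \<subseteq> U}. emeasure charge_measure U)"
    using outer_measure_outer_regular[of A] A by (simp add: emeasure_charge_measure)
  have "(SUP K\<in>{K. compact K \<and> K \<subseteq> A}. emeasure charge_measure K)
      = (SUP K\<in>{K. compact K \<and> K \<subseteq> A}. outer_measure K)"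
    by (rule SUP_cong) (auto intro!: emeasure_charge_measure borel_closed compact_sets_closed)
  then show "emeasure charge_measure A = (SUP K\<in>{K. compact K \<and> K \<subseteq> A}. emeasure charge_measure K)"
    using outer_measure_inner_regular[OF A] A by (simp add: emeasure_charge_measure)
qed (rule sets_charge_measure)

end

section \<open>A covering linear programme\<close>

lemma sum_squares_first_variation:
  fixes e d :: "'s \<Rightarrow> real"
  assumes "\<And>u. 0 < u \<Longrightarrow> u \<le> 1 \<Longrightarrow> (\<Sum>S\<in>F. (e S)\<^sup>2) \<le> (\<Sum>S\<in>F. (e S + u * d S)\<^sup>2)"
  shows "0 \<le> (\<Sum>S\<in>F. e S * d S)"
proof -
  have expand: "(\<Sum>S\<in>F. (e S + u * d S)\<^sup>2)
      = (\<Sum>S\<in>F. (e S)\<^sup>2) + u * (2 * (\<Sum>S\<in>F. e S * d S) + u * (\<Sum>S\<in>F. (d S)\<^sup>2))" for u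
    by (simp add: power2_eq_square algebra_simps sum.distrib sum_distrib_left)
  have ev: "\<forall>\<^sub>F u in at_right 0. 0 \<le> 2 * (\<Sum>S\<in>F. e S * d S) + u * (\<Sum>S\<in>F. (d S)\<^sup>2)"
    using eventually_at_right_real[OF zero_less_one]
  proof eventually_elim
    case (elim u)
    then have "0 \<le> u * (2 * (\<Sum>S\<in>F. e S * d S) + u * (\<Sum>S\<in>F. (d S)\<^sup>2))"
      using assms[of u] expand[of u] by simp
    then show ?case
      using elim by (simp add: zero_le_mult_iff)
  qed
  have lim: "((\<lambda>u. 2 * (\<Sum>S\<in>F. e S * d S) + u * (\<Sum>S\<in>F. (d S)\<^sup>2))
      \<longlongrightarrow> 2 * (\<Sum>S\<in>F. e S * d S)) (at_right 0)"
    by (auto intro!: tendsto_eq_intros)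
  have "0 \<le> 2 * (\<Sum>S\<in>F. e S * d S)"
    by (rule tendsto_lowerbound[OF lim ev]) simp
  then show ?thesis by simp
qed

text \<open>LP duality by least squares: \<open>w \<in> feasible\<close> is a mixed strategy on \<open>T\<close> (its
  \<open>Inl\<close>-part) together with slack variables (its \<open>Inr\<close>-part), and at a feasible point
  minimising the squared residuals, the residuals form a dual solution up to scaling.\<close>
locale covering_lp =
  fixes T :: "'t set" and F :: "'s set" and a :: "'s \<Rightarrow> 't \<Rightarrow> real" and c :: real
  assumes finite_T: "finite T" and T_nonempty: "T \<noteq> {}" and finite_F: "finite F"
    and a_nonneg: "0 \<le> a S t" and a_le_1: "a S t \<le> 1" and c_nonneg: "0 \<le> c"
begin

definition feasible :: "('t + 's \<Rightarrow> real) set" where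
  "feasible = {w. (\<forall>i. 0 \<le> w i \<and> w i \<le> 1) \<and> (\<Sum>t\<in>T. w (Inl t)) = 1}"

definition payoff :: "('t + 's \<Rightarrow> real) \<Rightarrow> 's \<Rightarrow> real" where
  "payoff w S = (\<Sum>t\<in>T. w (Inl t) * a S t)"

definition residual :: "('t + 's \<Rightarrow> real) \<Rightarrow> 's \<Rightarrow> real" where
  "residual w S = c - payoff w S + w (Inr S)"

lemma feasibleI:
  "(\<And>i. 0 \<le> w i) \<Longrightarrow> (\<And>i. w i \<le> 1) \<Longrightarrow> (\<Sum>t\<in>T. w (Inl t)) = 1 \<Longrightarrow> w \<in> feasible"
  by (simp add: feasible_def)

lemma feasible_convex:
  assumes "w \<in> feasible" "w' \<in> feasible" "0 \<le> u" "u \<le> 1"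
  shows "(\<lambda>i. w i + u * (w' i - w i)) \<in> feasible"
proof (rule feasibleI)
  fix i
  have "(1 - u) * w i + u * w' i \<in> {0..1}"
    using convexD[OF convex_real_interval(5), of "w i" 0 1 "w' i" "1 - u" u] assms
    by (simp add: feasible_def)
  then show "0 \<le> w i + u * (w' i - w i)" "w i + u * (w' i - w i) \<le> 1"
    by (simp_all add: algebra_simps)
next
  show "(\<Sum>t\<in>T. w (Inl t) + u * (w' (Inl t) - w (Inl t))) = 1"
    using assms by (simp add: feasible_def sum.distrib sum_subtractf flip: sum_distrib_left)
qed

lemma compact_feasible: "compact feasible"
proof -
  have "feasible = PiE UNIV (\<lambda>_. {0..1}) \<inter> {w. (\<Sum>t\<in>T. w (Inl t)) = 1}"
    by (auto simp: feasible_def PiE_UNIV_domain)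
  moreover have "closed {w :: 't + 's \<Rightarrow> real. (\<Sum>t\<in>T. w (Inl t)) = 1}"
    by (rule closed_Collect_eq) (auto intro!: continuous_intros)
  ultimately show ?thesis
    by (simp add: compact_Int_closed compact_PiE_UNIV)
qed

lemma least_squares_exists:
  "\<exists>ws\<in>feasible. \<forall>w\<in>feasible. (\<Sum>S\<in>F. (residual ws S)\<^sup>2) \<le> (\<Sum>S\<in>F. (residual w S)\<^sup>2)"
proof (rule continuous_attains_inf[OF compact_feasible])
  obtain t where "t \<in> T" using T_nonempty by blast
  then have "(\<lambda>i. if i = Inl t then 1 else 0) \<in> feasible"
    using finite_T by (intro feasibleI) simp_all
  then show "feasible \<noteq> {}" by blast
  show "continuous_on feasible (\<lambda>w. \<Sum>S\<in>F. (residual w S)\<^sup>2)"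
    unfolding residual_def payoff_def
    by (intro continuous_intros continuous_on_subset[OF continuous_on_product_coordinates] subset_UNIV)
qed

end

locale covering_lp_least_squares = covering_lp T F a c
    for T :: "'t set" and F :: "'s set" and a c +
  fixes ws :: "'t + 's \<Rightarrow> real"
  assumes ws_feasible: "ws \<in> feasible"
    and ws_least: "w \<in> feasible \<Longrightarrow> (\<Sum>S\<in>F. (residual ws S)\<^sup>2) \<le> (\<Sum>S\<in>F. (residual w S)\<^sup>2)"
begin

lemma residual_variation:
  assumes "w \<in> feasible"
  shows "0 \<le> (\<Sum>S\<in>F. residual ws S * (residual w S - residual ws S))"
proof (rule sum_squares_first_variation)
  fix u :: real assume "0 < u" "u \<le> 1"
  define wu where "wu i = ws i + u * (w i - ws i)" for i
  have "wu \<in> feasible"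
    unfolding wu_def using feasible_convex[OF ws_feasible assms] \<open>0 < u\<close> \<open>u \<le> 1\<close> by simp
  moreover have "residual wu S = residual ws S + u * (residual w S - residual ws S)" for S
    by (simp add: residual_def payoff_def wu_def algebra_simps sum.distrib sum_distrib_left sum_subtractf)
  ultimately show "(\<Sum>S\<in>F. (residual ws S)\<^sup>2) \<le> (\<Sum>S\<in>F. (residual ws S + u * (residual w S - residual ws S))\<^sup>2)"
    using ws_least[of wu] by simp
qed

lemma residual_slack_variation:
  assumes "S \<in> F" "0 \<le> v" "v \<le> 1"
  shows "0 \<le> residual ws S * (v - ws (Inr S))"
proof -
  have "ws(Inr S := v) \<in> feasible"
    using ws_feasible assms by (intro feasibleI) (auto simp: feasible_def)
  moreover have "residual (ws(Inr S := v)) S' - residual ws S' = (if S' = S then v - ws (Inr S) else 0)" for S'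
    by (simp add: residual_def payoff_def)
  then have "(\<Sum>S'\<in>F. residual ws S' * (residual (ws(Inr S := v)) S' - residual ws S'))
      = (\<Sum>S'\<in>F. if S' = S then residual ws S * (v - ws (Inr S)) else 0)"
    by (intro sum.cong) auto
  ultimately show ?thesis
    using residual_variation[of "ws(Inr S := v)"] assms(1) finite_F by simp
qed

lemma payoff_le_1: "payoff ws S \<le> 1"
proof -
  have "payoff ws S \<le> (\<Sum>t\<in>T. ws (Inl t))"
    unfolding payoff_def using ws_feasible a_le_1
    by (intro sum_mono) (auto simp: feasible_def intro: mult_left_le)
  then show ?thesis using ws_feasible by (simp add: feasible_def)
qed

lemma residual_nonneg: "S \<in> F \<Longrightarrow> 0 \<le> residual ws S"
  using residual_slack_variation[of S 1] payoff_le_1[of S] c_nonneg ws_feasible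
  by (cases "ws (Inr S) < 1") (auto simp: zero_le_mult_iff residual_def feasible_def)

lemma residual_slack:
  assumes "S \<in> F"
  shows "residual ws S * ws (Inr S) = 0"
proof -
  have "0 \<le> residual ws S * ws (Inr S)"
    using residual_nonneg[OF assms] ws_feasible by (simp add: feasible_def)
  moreover have "residual ws S * ws (Inr S) \<le> 0"
    using residual_slack_variation[OF assms, of 0] by simp
  ultimately show ?thesis by simp
qed

lemma residual_weighted_payoff:
  "(\<Sum>S\<in>F. residual ws S * payoff ws S) = c * (\<Sum>S\<in>F. residual ws S) - (\<Sum>S\<in>F. (residual ws S)\<^sup>2)"
proof -
  have "(\<Sum>S\<in>F. residual ws S * payoff ws S)
      = (\<Sum>S\<in>F. c * residual ws S + residual ws S * ws (Inr S) - (residual ws S)\<^sup>2)"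
    by (rule sum.cong) (simp_all add: residual_def power2_eq_square algebra_simps)
  also have "\<dots> = (\<Sum>S\<in>F. c * residual ws S - (residual ws S)\<^sup>2)"
    by (rule sum.cong) (simp_all add: residual_slack)
  finally show ?thesis
    by (simp add: sum_subtractf sum_distrib_left)
qed

lemma residual_weighted_column:
  assumes "t \<in> T"
  shows "(\<Sum>S\<in>F. residual ws S * a S t) \<le> (\<Sum>S\<in>F. residual ws S * payoff ws S)"
proof -
  define w where "w i = (case i of Inl t' \<Rightarrow> of_bool (t' = t) | Inr S \<Rightarrow> ws (Inr S))" for i
  have "w \<in> feasible"
    using ws_feasible assms finite_T by (intro feasibleI) (auto simp: w_def feasible_def split: sum.split)
  moreover have "residual w S - residual ws S = payoff ws S - a S t" for S
  proof -
    have "payoff w S = (\<Sum>t'\<in>T. if t' = t then a S t else 0)"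
      unfolding payoff_def w_def by (intro sum.cong) auto
    then show ?thesis
      using assms finite_T by (simp add: residual_def w_def)
  qed
  ultimately show ?thesis
    using residual_variation[of w] by (simp add: right_diff_distrib sum_subtractf)
qed

text \<open>If some \<open>S1\<close> misses the threshold, its residual is positive and the residuals divided
  by \<open>\<beta>\<close> are a dual solution; the dual bound then gives \<open>c \<Sum>e \<le> \<beta> = c \<Sum>e - \<Sum>e\<^sup>2\<close>.\<close>
lemma payoff_ge_threshold:
  assumes covered: "\<And>S. S \<in> F \<Longrightarrow> \<exists>t\<in>T. 0 < a S t"
    and dual: "\<And>q. \<forall>S\<in>F. 0 \<le> q S \<Longrightarrow> \<forall>t\<in>T. (\<Sum>S\<in>F. q S * a S t) \<le> 1 \<Longrightarrow> c * (\<Sum>S\<in>F. q S) \<le> 1"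
    and "S1 \<in> F"
  shows "c \<le> payoff ws S1"
proof (rule ccontr)
  define \<beta> where "\<beta> = (\<Sum>S\<in>F. residual ws S * payoff ws S)"
  assume "\<not> c \<le> payoff ws S1"
  moreover have "0 \<le> ws (Inr S1)"
    using ws_feasible by (simp add: feasible_def)
  ultimately have pos: "0 < residual ws S1"
    by (simp add: residual_def)
  obtain t1 where t1: "t1 \<in> T" "0 < a S1 t1"
    using covered[OF \<open>S1 \<in> F\<close>] by blast
  have "0 < residual ws S1 * a S1 t1"
    using pos t1 by simp
  also have "\<dots> \<le> (\<Sum>S\<in>F. residual ws S * a S t1)"
    by (rule member_le_sum) (use \<open>S1 \<in> F\<close> finite_F residual_nonneg a_nonneg in auto)
  also have "\<dots> \<le> \<beta>"
    unfolding \<beta>_def by (rule residual_weighted_column[OF t1(1)])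
  finally have "0 < \<beta>" .
  have "c * (\<Sum>S\<in>F. residual ws S / \<beta>) \<le> 1"
  proof (rule dual)
    show "\<forall>S\<in>F. 0 \<le> residual ws S / \<beta>"
      using residual_nonneg \<open>0 < \<beta>\<close> by simp
    show "\<forall>t\<in>T. (\<Sum>S\<in>F. residual ws S / \<beta> * a S t) \<le> 1"
      using residual_weighted_column \<open>0 < \<beta>\<close>
      by (simp add: \<beta>_def sum_divide_distrib[symmetric])
  qed
  then have "c * (\<Sum>S\<in>F. residual ws S) \<le> \<beta>"
    using \<open>0 < \<beta>\<close> by (simp add: sum_divide_distrib[symmetric] divide_le_eq)
  moreover have "(residual ws S1)\<^sup>2 \<le> (\<Sum>S\<in>F. (residual ws S)\<^sup>2)"
    by (rule member_le_sum) (use \<open>S1 \<in> F\<close> finite_F in auto)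
  moreover have "0 < (residual ws S1)\<^sup>2"
    using pos by simp
  ultimately show False
    using residual_weighted_payoff unfolding \<beta>_def by linarith
qed

end

lemma (in covering_lp) covering_distribution_exists:
  assumes "\<And>S. S \<in> F \<Longrightarrow> \<exists>t\<in>T. 0 < a S t"
    and "\<And>q. \<forall>S\<in>F. 0 \<le> q S \<Longrightarrow> \<forall>t\<in>T. (\<Sum>S\<in>F. q S * a S t) \<le> 1 \<Longrightarrow> c * (\<Sum>S\<in>F. q S) \<le> 1"
  shows "\<exists>p. (\<forall>t\<in>T. 0 \<le> p t) \<and> (\<Sum>t\<in>T. p t) = 1 \<and> (\<forall>S\<in>F. c \<le> (\<Sum>t\<in>T. p t * a S t))"
proof -
  obtain ws where "ws \<in> feasible" "\<forall>w\<in>feasible. (\<Sum>S\<in>F. (residual ws S)\<^sup>2) \<le> (\<Sum>S\<in>F. (residual w S)\<^sup>2)"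
    using least_squares_exists by blast
  then interpret covering_lp_least_squares T F a c ws
    by unfold_locales auto
  have "\<forall>S\<in>F. c \<le> (\<Sum>t\<in>T. ws (Inl t) * a S t)"
    using payoff_ge_threshold[OF assms] unfolding payoff_def by blast
  moreover have "\<forall>t\<in>T. 0 \<le> ws (Inl t)" "(\<Sum>t\<in>T. ws (Inl t)) = 1"
    using ws_feasible by (simp_all add: feasible_def)
  ultimately show ?thesis
    by (intro exI[of _ "\<lambda>t. ws (Inl t)"] conjI) simp_all
qed

section \<open>The finite covering problem of \<open>G\<^sub>m(H)\<close>\<close>

lemma ennreal_sum_le_nnsum: "finite G \<Longrightarrow> G \<subseteq> A \<Longrightarrow> ennreal (sum f G) \<le> nnsum f A"
  unfolding nnsum_def by (rule SUP_upper) auto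

lemma nnsum_le_1I: "(\<And>G. finite G \<Longrightarrow> G \<subseteq> A \<Longrightarrow> sum f G \<le> 1) \<Longrightarrow> nnsum f A \<le> 1"
  unfolding nnsum_def by (rule SUP_least) (auto simp: ennreal_leI[of _ 1, simplified])

lemma pairwise_nonadjacent_consistent:
  assumes "\<forall>S\<in>G. \<forall>S'\<in>G. \<not> Gm_adj S S'" "S \<in> G"
  shows "consistent (\<lambda>x. \<exists>S'\<in>G. (x, True) \<in> set S') S"
  unfolding consistent_def
proof (intro allI impI)
  fix i assume "i < length S"
  then have "(fst (S ! i), snd (S ! i)) \<in> set S" by simp
  then show "(\<exists>S'\<in>G. (fst (S ! i), True) \<in> set S') = snd (S ! i)"
    using assms by (cases "snd (S ! i)") (auto simp: Gm_adj_def)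
qed

lemma dual_solution_fractional_clique:
  assumes "\<forall>S\<in>F. 0 \<le> q S" and "\<forall>t. (\<Sum>S\<in>F. q S * indicator {h. consistent h S} t) \<le> 1" and "finite F"
  shows "fractional_clique H m (\<lambda>S. if S \<in> F then q S else 0)"
  unfolding fractional_clique_def
proof (intro conjI allI impI ballI)
  fix I assume I: "Gm_independent H m I"
  show "nnsum (\<lambda>S. if S \<in> F then q S else 0) I \<le> 1"
  proof (rule nnsum_le_1I)
    fix G assume G: "finite G" "G \<subseteq> I"
    define t where "t x = (\<exists>S'\<in>G. (x, True) \<in> set S')" for x
    have "consistent t S" if "S \<in> G" for S
      unfolding t_def using I G that
      by (intro pairwise_nonadjacent_consistent) (auto simp: Gm_independent_def)
    have "(\<Sum>S\<in>G. if S \<in> F then q S else 0) = (\<Sum>S\<in>G \<inter> F. q S)"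
      using G(1) by (simp add: sum.If_cases Int_commute)
    also have "\<dots> = (\<Sum>S\<in>G \<inter> F. q S * indicator {h. consistent h S} t)"
      using \<open>\<And>S. S \<in> G \<Longrightarrow> consistent t S\<close> by (intro sum.cong) auto
    also have "\<dots> \<le> (\<Sum>S\<in>F. q S * indicator {h. consistent h S} t)"
      by (rule sum_mono2) (use assms in auto)
    also have "\<dots> \<le> 1"
      using assms by blast
    finally show "(\<Sum>S\<in>G. if S \<in> F then q S else 0) \<le> 1" .
  qed
qed (use assms in auto)

lemma sum_le_frac_clique_number:
  assumes "finite F" "F \<subseteq> Gm_vertices H m" "\<forall>S\<in>F. 0 \<le> q S"
    and "\<forall>t. (\<Sum>S\<in>F. q S * indicator {h. consistent h S} t) \<le> 1"
  shows "ennreal (\<Sum>S\<in>F. q S) \<le> frac_clique_number H m"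
proof -
  have "ennreal (\<Sum>S\<in>F. q S) = ennreal (\<Sum>S\<in>F. if S \<in> F then q S else 0)"
    by simp
  also have "\<dots> \<le> nnsum (\<lambda>S. if S \<in> F then q S else 0) (Gm_vertices H m)"
    by (rule ennreal_sum_le_nnsum) (use assms in auto)
  also have "\<dots> \<le> frac_clique_number H m"
    unfolding frac_clique_number_def
    by (rule SUP_upper) (use dual_solution_fractional_clique assms in blast)
  finally show ?thesis .
qed

lemma one_le_frac_clique_number:
  assumes "S \<in> Gm_vertices H m"
  shows "1 \<le> frac_clique_number H m"
proof -
  have "\<forall>t. (\<Sum>S'\<in>{S}. 1 * indicator {h. consistent h S'} t) \<le> (1 :: real)"
    by (simp only: sum.insert finite.emptyI empty_iff not_False_eq_True sum.empty add_0_right mult_1)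
       (simp add: indicator_def)
  then show ?thesis
    using sum_le_frac_clique_number[of "{S}" H m "\<lambda>_. 1"] assms by simp
qed

lemma enn2real_one_divide_mult_le_1:
  assumes "ennreal x \<le> \<omega>" "0 \<le> x"
  shows "enn2real (1 / \<omega>) * x \<le> 1"
proof (cases \<omega>)
  case (real r)
  show ?thesis
  proof (cases "r = 0")
    case False
    then have "0 < r"
      using real by simp
    then have "1 / \<omega> = ennreal (1 / r)"
      using divide_ennreal[of 1 r] real by simp
    moreover have "x \<le> r"
      using assms real by simp
    ultimately show ?thesis
      using real False by (simp add: divide_le_eq)
  qed (use real in simp)
qed simp

lemma consistent_cong: "(\<And>x. x \<in> fst ` set S \<Longrightarrow> g x = h x) \<Longrightarrow> consistent g S = consistent h S"
  unfolding consistent_def by (metis nth_mem image_eqI)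

lemma finite_supported_hypotheses: "finite X \<Longrightarrow> finite {t :: 'x \<Rightarrow> bool. \<forall>x. t x \<longrightarrow> x \<in> X}"
proof -
  assume "finite X"
  have "{t :: 'x \<Rightarrow> bool. \<forall>x. t x \<longrightarrow> x \<in> X} \<subseteq> (\<lambda>A x. x \<in> A) ` Pow X"
  proof
    fix t :: "'x \<Rightarrow> bool" assume "t \<in> {t. \<forall>x. t x \<longrightarrow> x \<in> X}"
    then have "t = (\<lambda>x. x \<in> {x. t x})" "{x. t x} \<in> Pow X" by auto
    then show "t \<in> (\<lambda>A x. x \<in> A) ` Pow X" by blast
  qed
  then show ?thesis
    using \<open>finite X\<close> by (meson finite_Pow_iff finite_imageI finite_subset)
qed

lemma finite_distribution_on_datasets:
  fixes H :: "('x \<Rightarrow> bool) set"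
  assumes "finite F" "F \<subseteq> Gm_vertices H m"
  shows "\<exists>p T. finite T \<and> (\<forall>t\<in>T. 0 \<le> p t) \<and> (\<Sum>t\<in>T. p t) = 1 \<and>
    (\<forall>S\<in>F. enn2real (1 / frac_clique_number H m) \<le> (\<Sum>t\<in>T. p t * indicator {h. consistent h S} t))"
proof -
  define X where "X = (\<Union>S\<in>F. fst ` set S)"
  define T where "T = {t :: 'x \<Rightarrow> bool. \<forall>x. t x \<longrightarrow> x \<in> X}"
  define trim where "trim t x = (t x \<and> x \<in> X)" for t :: "'x \<Rightarrow> bool" and x
  have trim: "trim t \<in> T" "S \<in> F \<Longrightarrow> consistent (trim t) S = consistent t S" for t S
  proof -
    show "trim t \<in> T"
      by (simp add: T_def trim_def)
    show "consistent (trim t) S = consistent t S" if "S \<in> F"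
      by (rule consistent_cong) (use that in \<open>auto simp: trim_def X_def\<close>)
  qed
  interpret covering_lp T F "\<lambda>S. indicator {h. consistent h S}" "enn2real (1 / frac_clique_number H m)"
  proof
    show "finite T"
      unfolding T_def X_def using assms(1) by (intro finite_supported_hypotheses) auto
    show "T \<noteq> {}"
      using trim(1) by blast
  qed (use assms(1) in auto)
  have "\<exists>p. (\<forall>t\<in>T. 0 \<le> p t) \<and> (\<Sum>t\<in>T. p t) = 1 \<and>
      (\<forall>S\<in>F. enn2real (1 / frac_clique_number H m) \<le> (\<Sum>t\<in>T. p t * indicator {h. consistent h S} t))"
  proof (rule covering_distribution_exists)
    fix S assume "S \<in> F"
    then obtain h where "consistent h S"
      using assms(2) by (auto simp: Gm_vertices_def realizable_def)
    then show "\<exists>t\<in>T. (0 :: real) < indicator {h. consistent h S} t"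
      using trim(1)[of h] trim(2)[OF \<open>S \<in> F\<close>, of h] by (intro bexI[of _ "trim h"]) simp_all
  next
    fix q :: "'x dataset \<Rightarrow> real"
    assume q: "\<forall>S\<in>F. 0 \<le> q S" "\<forall>t\<in>T. (\<Sum>S\<in>F. q S * indicator {h. consistent h S} t) \<le> 1"
    have "(\<Sum>S\<in>F. q S * indicator {h. consistent h S} t) \<le> 1" for t
    proof -
      have "(\<Sum>S\<in>F. q S * indicator {h. consistent h S} t) = (\<Sum>S\<in>F. q S * indicator {h. consistent h S} (trim t))"
        by (intro sum.cong) (simp_all add: trim(2) indicator_def)
      then show ?thesis
        using q(2) trim(1)[of t] by simp
    qed
    then have "ennreal (\<Sum>S\<in>F. q S) \<le> frac_clique_number H m"
      using sum_le_frac_clique_number assms q(1) by blast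
    then show "enn2real (1 / frac_clique_number H m) * (\<Sum>S\<in>F. q S) \<le> 1"
      using q(1) by (simp add: enn2real_one_divide_mult_le_1 sum_nonneg)
  qed
  then show ?thesis
    using finite_T by blast
qed

theorem mainTheorem8:
  fixes H :: "('x \<Rightarrow> bool) set" and m :: nat
  shows "\<exists>\<mu> :: ('x \<Rightarrow> bool) measure.
           prob_space \<mu> \<and> regular_borel_measure \<mu> \<and>
           (\<forall>S. length S = m \<longrightarrow> realizable H S \<longrightarrow>
              emeasure \<mu> {h. consistent h S} \<ge> 1 / frac_clique_number H m)"
proof -
  obtain lam :: "('x \<Rightarrow> bool) set \<Rightarrow> real" where "prob_charge lam"
    and lam: "\<forall>S\<in>Gm_vertices H m. enn2real (1 / frac_clique_number H m) \<le> lam {h. consistent h S}"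
    using prob_charge_from_finite_distributions[where I = "Gm_vertices H m"
        and c = "enn2real (1 / frac_clique_number H m)" and A = "\<lambda>S. {h. consistent h S}",
        OF finite_distribution_on_datasets]
    by blast
  interpret stone_charge lam
    using \<open>prob_charge lam\<close> compact_UNIV_fun_bool clopen_basis_fun_bool compact_imp_closed_fun_bool
    by (intro stone_charge.intro stone_charge_axioms.intro) auto
  show ?thesis
  proof (intro exI conjI allI impI)
    fix S :: "'x dataset" assume "length S = m" "realizable H S"
    then have S: "S \<in> Gm_vertices H m"
      by (simp add: Gm_vertices_def)
    have "1 / frac_clique_number H m \<noteq> \<top>"
      using one_le_frac_clique_number[OF S] by (auto simp: ennreal_divide_eq_top_iff)
    then have "1 / frac_clique_number H m = ennreal (enn2real (1 / frac_clique_number H m))"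
      by (simp add: ennreal_enn2real_if)
    also have "\<dots> \<le> ennreal (lam {h. consistent h S})"
      using lam S by (simp add: ennreal_leI)
    also have "\<dots> \<le> emeasure charge_measure {h. consistent h S}"
      by (rule charge_le_charge_measure[OF clopen_consistent])
    finally show "1 / frac_clique_number H m \<le> emeasure charge_measure {h. consistent h S}" .
  qed (simp_all add: prob_space_charge_measure regular_charge_measure)
qed

end
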